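(* Let $a_0,a_2\in\mathbb{C}$. The second-order recursion $$z_n = \frac{a_2 z_{n-2} + z_{n-1} + a_0}{z_{n-2}}$$ is periodic with period $6$ (i.e. $z_7=z_1$ and $z_8=z_2$ in $\mathbb{C}(z_1,z_2)$) if and only if $a_0=0$ and $a_2=0$, i.e. the recursion is $z_n=z_{n-1}/z_{n-2}$.
   Context: Let $z_1,z_2$ be independent indeterminates over $\mathbb{C}$ and define $z_n\in\mathbb{C}(z_1,z_2)$ for $n\ge3$ by the recursion. A second-order recursion is periodic with period $k$ if all iterates are well-defined elements of $\mathbb{C}(z_1,z_2)$ (no denominator identically zero) and $z_{k+1}=z_1$, $z_{k+2}=z_2$. *)

theory Defs
  imports "HOL-Computational_Algebra.Polynomial" "HOL-Computational_Algebra.Fraction_Field"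
begin

text \<open>The field C(z1,z2) of rational functions in two independent indeterminates,
realised as the fraction field of C[z1][z2].\<close>
type_synonym rat2 = "complex poly poly fract"

definition Z1 :: rat2 where "Z1 = Fract [:[:0, 1:]:] 1"
definition Z2 :: rat2 where "Z2 = Fract [:0, 1:] 1"
definition cst :: "complex \<Rightarrow> rat2" where "cst c = Fract [:[:c:]:] 1"

text \<open>Iterates z_n (n \<ge> 1) of the recursion
  z_n = (a2 z_{n-2} + z_{n-1} + a0) / z_{n-2}, starting from z_1 = Z1, z_2 = Z2.
  (Index 0 is unused.)\<close>
fun zseq :: "complex \<Rightarrow> complex \<Rightarrow> nat \<Rightarrow> rat2" where
  "zseq a0 a2 0 = 0"
| "zseq a0 a2 (Suc 0) = Z1"
| "zseq a0 a2 (Suc (Suc 0)) = Z2"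
| "zseq a0 a2 (Suc (Suc (Suc n))) =
     (cst a2 * zseq a0 a2 (Suc n) + zseq a0 a2 (Suc (Suc n)) + cst a0) / zseq a0 a2 (Suc n)"

text \<open>Periodic with period k: the denominators z_1,...,z_k used to form z_3,...,z_{k+2}
  are not identically zero, and z_{k+1} = z_1, z_{k+2} = z_2.\<close>
definition periodic_with :: "complex \<Rightarrow> complex \<Rightarrow> nat \<Rightarrow> bool" where
  "periodic_with a0 a2 k \<longleftrightarrow>
     (\<forall>n\<in>{1..k}. zseq a0 a2 n \<noteq> 0) \<and>
     zseq a0 a2 (k + 1) = zseq a0 a2 1 \<and> zseq a0 a2 (k + 2) = zseq a0 a2 2"

end

theory Submission
  imports Defs "HOL-Computational_Algebra.Polynomial_Factorial"
begin

text \<open>Running the recursion forwards from \<open>z\<^sub>1 = x\<close>, \<open>z\<^sub>2 = y\<close> and backwards from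
  \<open>z\<^sub>7 = x\<close>, \<open>z\<^sub>8 = y\<close> gives two expressions for \<open>z\<^sub>5\<close>; clearing denominators, period 6
  forces the polynomial \<open>period6_defect a\<^sub>0 a\<^sub>2 x y\<close> to vanish in \<open>\<complex>[x, y]\<close>, hence at every
  point of \<open>\<complex>\<^sup>2\<close>. On the line \<open>y = a\<^sub>2\<close> this forces \<open>a\<^sub>2 = 0\<close>, and then on the line
  \<open>x = 0\<close> it forces \<open>a\<^sub>0 = 0\<close>. Conversely, for \<open>a\<^sub>0 = a\<^sub>2 = 0\<close> the iterates are
  \<open>x, y, y/x, 1/x, 1/y, x/y, x, y\<close>.\<close>

definition period6_defect :: "'a::comm_ring_1 \<Rightarrow> 'a \<Rightarrow> 'a \<Rightarrow> 'a \<Rightarrow> 'a" where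
  "period6_defect A B x y =
     y * (x + A + A * (y - B)) * (B * x + y + A)
     - (x - B) * (y - B) * (B * y * (B * x + y + A) + x * (B * y + A) + (B * x + y + A) + A * x * y)"

lemma period_6_imp_period6_defect_eq_0:
  fixes z :: "nat \<Rightarrow> 'a::comm_ring_1"
  assumes rec: "\<And>n. 1 \<le> n \<Longrightarrow> n \<le> 6 \<Longrightarrow> z n * z (n + 2) = B * z n + z (n + 1) + A"
    and z7: "z 7 = z 1" and z8: "z 8 = z 2"
  shows "period6_defect A B (z 1) (z 2) = 0"
proof -
  define x y where "x = z 1" and "y = z 2"
  have z3: "x * z 3 = B * x + y + A" using rec[of 1] by (simp add: x_def y_def eval_nat_numeral)
  have z4: "y * z 4 = B * y + z 3 + A" using rec[of 2] by (simp add: y_def eval_nat_numeral)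
  have z5: "z 3 * z 5 = B * z 3 + z 4 + A" using rec[of 3] by (simp add: eval_nat_numeral)
  have z6_back: "(y - B) * z 6 = x + A"
    using rec[of 6] z7 z8 by (simp add: x_def y_def algebra_simps)
  have z5_back: "(x - B) * (y - B) * z 5 = x + A + A * (y - B)"
  proof -
    have z5_x: "(x - B) * z 5 = z 6 + A"
      using rec[of 5] z7 by (simp add: x_def algebra_simps)
    have "(x - B) * (y - B) * z 5 = (y - B) * ((x - B) * z 5)" by (simp add: algebra_simps)
    also have "\<dots> = (y - B) * z 6 + (y - B) * A" by (simp add: z5_x distrib_left)
    finally show ?thesis using z6_back by (simp add: algebra_simps)
  qed
  have xy_z4: "x * y * z 4 = x * (B * y + A) + (B * x + y + A)"
    using z3 z4 by (simp add: algebra_simps)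
  have "y * (x + A + A * (y - B)) * (B * x + y + A) = y * ((x - B) * (y - B) * z 5) * (x * z 3)"
    by (simp only: z5_back z3)
  also have "\<dots> = (x - B) * (y - B) * (x * y * (z 3 * z 5))"
    by (simp add: ac_simps)
  also have "\<dots> = (x - B) * (y - B) * (B * y * (x * z 3) + x * y * z 4 + A * x * y)"
    by (simp add: z5 algebra_simps)
  also have "\<dots> = (x - B) * (y - B) *
      (B * y * (B * x + y + A) + x * (B * y + A) + (B * x + y + A) + A * x * y)"
    by (simp add: z3 xy_z4 add.assoc)
  finally show ?thesis by (simp add: period6_defect_def x_def y_def)
qed

lemma period6_defect_eq_0_imp_coeffs_eq_0:
  fixes A B :: "'a::{idom, ring_char_0}"
  assumes vanish: "\<And>x y. period6_defect A B x y = 0"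
  shows "A = 0 \<and> B = 0"
proof -
  have on_line_y_eq_B: "B * (x + A) * (B * x + B + A) = 0" for x
    using vanish[of x B] by (simp add: period6_defect_def)
  have B0: "B = 0"
  proof (rule ccontr)
    assume "B \<noteq> 0"
    then have "B * (1 - A) + B + A = 0" "B * (2 - A) + B + A = 0"
      using on_line_y_eq_B[of "1 - A"] on_line_y_eq_B[of "2 - A"] by simp_all
    then have "(B * (2 - A) + B + A) - (B * (1 - A) + B + A) = 0" by simp
    then have "B = 0" by (simp add: algebra_simps)
    with \<open>B \<noteq> 0\<close> show False ..
  qed
  have on_line_x_eq_0: "A * y * (1 + y) * (y + A) = 0" for y
    using vanish[of 0 y] B0 by (simp add: period6_defect_def algebra_simps)
  have roots: "A = 0 \<or> 1 + A = 0" "A = 0 \<or> 2 + A = 0"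
    using on_line_x_eq_0[of 1] on_line_x_eq_0[of 2] by simp_all
  have "A = 0"
  proof (rule ccontr)
    assume "A \<noteq> 0"
    with roots have "(2 + A) - (1 + A) = 0" by simp
    then show False by simp
  qed
  with B0 show ?thesis by simp
qed

lemma Z1_eq_to_fract: "Z1 = to_fract [:[:0, 1:]:]"
  and Z2_eq_to_fract: "Z2 = to_fract [:0, 1:]"
  and cst_eq_to_fract: "cst c = to_fract [:[:c:]:]"
  by (simp_all add: Z1_def Z2_def cst_def to_fract_def)

lemma Z1_nonzero: "Z1 \<noteq> 0" and Z2_nonzero: "Z2 \<noteq> 0"
  by (simp_all add: Z1_eq_to_fract Z2_eq_to_fract)

lemma cst_0: "cst 0 = 0"
  by (simp add: cst_eq_to_fract)

lemma period6_defect_generic_eq_0_imp_eq_0: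
  assumes "period6_defect (cst a) (cst b) Z1 Z2 = 0"
  shows "period6_defect a b x y = 0"
proof -
  let ?P = "period6_defect [:[:a:]:] [:[:b:]:] [:[:0, 1:]:] [:0, 1:]"
  have "to_fract ?P = period6_defect (cst a) (cst b) Z1 Z2"
    by (simp only: period6_defect_def Z1_eq_to_fract Z2_eq_to_fract cst_eq_to_fract
        to_fract_add to_fract_diff to_fract_mult)
  then have "to_fract ?P = 0" using assms by simp
  then have "poly (poly ?P [:y:]) x = 0" by simp
  then show ?thesis by (simp only: period6_defect_def poly_add poly_diff poly_mult) simp
qed

lemma zseq_mult_rec:
  assumes "1 \<le> n" and "zseq a0 a2 n \<noteq> 0"
  shows "zseq a0 a2 n * zseq a0 a2 (n + 2) = cst a2 * zseq a0 a2 n + zseq a0 a2 (n + 1) + cst a0"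
proof -
  obtain m where "n = Suc m" using assms(1) by (cases n) auto
  with assms(2) show ?thesis by simp
qed

lemma zseq_0_0:
  "zseq 0 0 1 = Z1" "zseq 0 0 2 = Z2" "zseq 0 0 3 = Z2 / Z1" "zseq 0 0 4 = 1 / Z1"
  "zseq 0 0 5 = 1 / Z2" "zseq 0 0 6 = Z1 / Z2" "zseq 0 0 7 = Z1" "zseq 0 0 8 = Z2"
  using Z1_nonzero Z2_nonzero by (simp_all add: eval_nat_numeral cst_0 field_simps)

theorem mainTheorem5:
  fixes a0 a2 :: complex
  shows "periodic_with a0 a2 6 \<longleftrightarrow> a0 = 0 \<and> a2 = 0"
proof
  assume periodic: "periodic_with a0 a2 6"
  have "period6_defect (cst a0) (cst a2) (zseq a0 a2 1) (zseq a0 a2 2) = 0"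
  proof (rule period_6_imp_period6_defect_eq_0)
    show "zseq a0 a2 n * zseq a0 a2 (n + 2) = cst a2 * zseq a0 a2 n + zseq a0 a2 (n + 1) + cst a0"
      if "1 \<le> n" "n \<le> 6" for n
      using periodic that by (intro zseq_mult_rec) (auto simp: periodic_with_def)
    show "zseq a0 a2 7 = zseq a0 a2 1" "zseq a0 a2 8 = zseq a0 a2 2"
      using periodic by (simp_all add: periodic_with_def)
  qed
  then have "period6_defect a0 a2 x y = 0" for x y
    by (intro period6_defect_generic_eq_0_imp_eq_0) (simp add: numeral_2_eq_2)
  then show "a0 = 0 \<and> a2 = 0" by (rule period6_defect_eq_0_imp_coeffs_eq_0)
next
  assume "a0 = 0 \<and> a2 = 0"
  moreover have "zseq 0 0 n \<noteq> 0" if "n \<in> {1..6}" for n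
  proof -
    from that have "n \<in> {1, 2, 3, 4, 5, 6}" by auto
    then show ?thesis using Z1_nonzero Z2_nonzero by (auto simp: zseq_0_0)
  qed
  ultimately show "periodic_with a0 a2 6"
    by (auto simp: periodic_with_def zseq_0_0)
qed

end
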